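(* Fix $\theta>0$ and real parameters $\mu_b,\mu_c,\sigma_b^2,\sigma_c^2,\sigma_{bc}$ with $\sigma_{bc}>\mu_c$. For the snowdrift game described in the context, let $F_d$ denote the quantity $F$ for group size $d$. Then there exists $d_0\ge2$ such that $F_d>0$ for all $d\ge d_0$. That is, for interactions in large enough groups, weak selection favors the abundance of $C$ whenever $\sigma_{bc}>\mu_c$, for every $\theta>0$.
   Context: For integers $0\le k\le n$ and $\theta>0$ let $\psi_n^k=\frac{\prod_{i=1}^{k}(\theta+i-1)\prod_{j=1}^{n-k}(\theta+j-1)}{\prod_{l=1}^{n}(2\theta+l-1)}$ (empty products equal $1$). For group size $d\ge2$ and real arrays $\mu_{C,k},\mu_{D,k},\sigma_{CC,kl},\sigma_{CD,kl},\sigma_{DD,kl}$ ($k,l=0,\ldots,d-1$) define $$F=\sum_{k=0}^{d-1}\binom{d-1}{k}\psi_{d+1}^{k+1}(\mu_{C,k}-\mu_{D,k})+\sum_{k,l=0}^{d-1}\binom{d-1}{k}\binom{d-1}{l}\Big[-\psi_{2d+1}^{k+l+2}(\sigma_{CC,kl}-\sigma_{CD,kl})+\psi_{2d+1}^{k+l+1}(\sigma_{DD,kl}-\sigma_{CD,kl})\Big].$$ These arrays are the scaled means and second moments of the payoffs $a_k$ (cooperator) and $b_k$ (defector) with $k$ cooperating partners. In the paper's large-population weak-selection approximation, the average abundance of $C$ is $\tfrac12+\tfrac{\delta(1-u)}{u}F$, so weak selection favors the abundance of $C$ iff $F>0$. Snowdrift game: random benefit $b$ and cost $c$ have scaled moments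 $\mu_b,\mu_c,\sigma_b^2,\sigma_c^2,\sigma_{bc}$ (i.e. $E[b]=\mu_b\delta+o(\delta)$, $E[c]=\mu_c\delta+o(\delta)$, $E[b^2]=\sigma_b^2\delta+o(\delta)$, $E[c^2]=\sigma_c^2\delta+o(\delta)$, $E[bc]=\sigma_{bc}\delta+o(\delta)$). Payoffs are $a_k=b-\frac{c}{k+1}$, $b_0=0$, $b_k=b$ for $k\ge1$. Hence $\mu_{C,k}=\mu_b-\frac{\mu_c}{k+1}$, $\mu_{D,k}=\mu_b\mathbf 1_{\{k\ne0\}}$, $\sigma_{CC,kl}=\sigma_b^2-\big(\frac1{k+1}+\frac1{l+1}\big)\sigma_{bc}+\frac{\sigma_c^2}{(k+1)(l+1)}$, $\sigma_{DD,kl}=\sigma_b^2\mathbf 1_{\{k\ne0,\,l\ne0\}}$, $\sigma_{CD,kl}=\big(\sigma_b^2-\frac{\sigma_{bc}}{k+1}\big)\mathbf 1_{\{l\ne0\}}$. *)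

theory Defs
  imports Complex_Main
begin

definition psi :: "real \<Rightarrow> nat \<Rightarrow> nat \<Rightarrow> real" where
  "psi \<theta> n k = (\<Prod>i=1..k. \<theta> + real i - 1) * (\<Prod>j=1..n-k. \<theta> + real j - 1)
                  / (\<Prod>l=1..n. 2 * \<theta> + real l - 1)"

definition F_gen :: "real \<Rightarrow> nat \<Rightarrow> (nat \<Rightarrow> real) \<Rightarrow> (nat \<Rightarrow> real)
    \<Rightarrow> (nat \<Rightarrow> nat \<Rightarrow> real) \<Rightarrow> (nat \<Rightarrow> nat \<Rightarrow> real) \<Rightarrow> (nat \<Rightarrow> nat \<Rightarrow> real) \<Rightarrow> real" where
  "F_gen \<theta> d muC muD sCC sCD sDD =
     (\<Sum>k=0..d-1. real ((d-1) choose k) * psi \<theta> (d+1) (k+1) * (muC k - muD k))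
   + (\<Sum>k=0..d-1. \<Sum>l=0..d-1. real ((d-1) choose k) * real ((d-1) choose l) *
        (- psi \<theta> (2*d+1) (k+l+2) * (sCC k l - sCD k l)
         + psi \<theta> (2*d+1) (k+l+1) * (sDD k l - sCD k l)))"

definition sd_muC :: "real \<Rightarrow> real \<Rightarrow> nat \<Rightarrow> real" where
  "sd_muC mb mc k = mb - mc / real (k+1)"
definition sd_muD :: "real \<Rightarrow> nat \<Rightarrow> real" where
  "sd_muD mb k = (if k \<noteq> 0 then mb else 0)"
definition sd_sCC :: "real \<Rightarrow> real \<Rightarrow> real \<Rightarrow> nat \<Rightarrow> nat \<Rightarrow> real" where
  "sd_sCC sb2 sc2 sbc k l = sb2 - (1 / real (k+1) + 1 / real (l+1)) * sbc
                             + sc2 / (real (k+1) * real (l+1))"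
definition sd_sDD :: "real \<Rightarrow> nat \<Rightarrow> nat \<Rightarrow> real" where
  "sd_sDD sb2 k l = (if k \<noteq> 0 \<and> l \<noteq> 0 then sb2 else 0)"
definition sd_sCD :: "real \<Rightarrow> real \<Rightarrow> nat \<Rightarrow> nat \<Rightarrow> real" where
  "sd_sCD sb2 sbc k l = (if l \<noteq> 0 then sb2 - sbc / real (k+1) else 0)"

definition F_snowdrift :: "real \<Rightarrow> real \<Rightarrow> real \<Rightarrow> real \<Rightarrow> real \<Rightarrow> real \<Rightarrow> nat \<Rightarrow> real" where
  "F_snowdrift \<theta> mb mc sb2 sc2 sbc d =
     F_gen \<theta> d (sd_muC mb mc) (sd_muD mb) (sd_sCC sb2 sc2 sbc) (sd_sCD sb2 sbc) (sd_sDD sb2)"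

end

theory Submission
  imports Defs "HOL-Analysis.Analysis"
begin

text \<open>
  The numbers \<^term>\<open>psi \<theta> n k\<close> are moments of the symmetric Beta distribution:
  \<^term>\<open>psi \<theta> n k * Beta \<theta> \<theta>\<close> is the integral over [0,1] of x^k (1-x)^(n-k) against
  the weight x^(\<theta>-1) (1-x)^(\<theta>-1). Hence F for group size d = n + 1 is the Beta integral of a
  polynomial in x. In the Bernstein basis this polynomial depends, for the snowdrift payoffs, on
  K ~ Bin(n, x) only through P(K = 0) = (1-x)^n and E[1/(K+1)], and (n+1) x E[1/(K+1)] = 1 - (1-x)^(n+1).
  The resulting closed form of d times the integrand has leading term (sigma_bc - mu_c)(1 - x), and
  bounding the other terms pointwise gives
  d F_d \<ge> (sigma_bc - mu_c)/2 - O(1/d) - O(\<^term>\<open>psi \<theta> d 0\<close>). Finally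
  \<^term>\<open>psi \<theta> d 0\<close> is the product of the factors 1 - \<theta>/(2\<theta>+j) for j < d, which is at most
  exp(-\<theta>/(2\<theta>+1) H_d) and therefore tends to 0.
\<close>

section \<open>Moments of the symmetric Beta distribution\<close>

lemma prod_shifted_eq_pochhammer: "(\<Prod>i=1..k. t + real i - 1) = pochhammer t k"
  by (induction k) (simp_all add: pochhammer_Suc prod.nat_ivl_Suc' algebra_simps)

lemma psi_eq_pochhammer:
  "psi \<theta> n k = pochhammer \<theta> k * pochhammer \<theta> (n - k) / pochhammer (2 * \<theta>) n"
  unfolding psi_def prod_shifted_eq_pochhammer
  using prod_shifted_eq_pochhammer[of "2 * \<theta>" n] by simp

lemma psi_1_0: "\<theta> > 0 \<Longrightarrow> psi \<theta> (Suc 0) 0 = 1 / 2"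
  by (simp add: psi_eq_pochhammer)

lemma psi_0_pos: "\<theta> > 0 \<Longrightarrow> psi \<theta> m 0 > 0"
  by (simp add: psi_eq_pochhammer pochhammer_pos)

lemma psi_Suc_0: "psi \<theta> (Suc m) 0 = psi \<theta> m 0 * ((\<theta> + real m) / (2 * \<theta> + real m))"
  by (simp add: psi_eq_pochhammer pochhammer_Suc)

lemma psi_Suc_1: "psi \<theta> (Suc m) 1 = psi \<theta> m 0 * (\<theta> / (2 * \<theta> + real m))"
  by (simp add: psi_eq_pochhammer pochhammer_Suc)

lemma psi_0_le_exp_harm:
  assumes "\<theta> > 0"
  shows "psi \<theta> m 0 \<le> exp (- (\<theta> / (2 * \<theta> + 1)) * harm m)"
proof (induction m)
  case 0
  then show ?case
    by (simp add: psi_eq_pochhammer harm_def)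
next
  case (Suc m)
  define c where "c = \<theta> / (2 * \<theta> + 1)"
  have "c / real (Suc m) = \<theta> / ((2 * \<theta> + 1) * real (Suc m))"
    by (simp add: c_def)
  also have "\<dots> \<le> \<theta> / (2 * \<theta> + real m)"
    using assms by (intro divide_left_mono mult_pos_pos) (auto simp: ring_distribs)
  moreover have "(\<theta> + real m) / (2 * \<theta> + real m) = 1 - \<theta> / (2 * \<theta> + real m)"
    using assms by (simp add: field_simps add_pos_nonneg)
  ultimately have "(\<theta> + real m) / (2 * \<theta> + real m) \<le> 1 + - (c / real (Suc m))"
    by linarith
  then have step: "(\<theta> + real m) / (2 * \<theta> + real m) \<le> exp (- (c / real (Suc m)))"
    using exp_ge_add_one_self order_trans by blast
  have "psi \<theta> (Suc m) 0 = psi \<theta> m 0 * ((\<theta> + real m) / (2 * \<theta> + real m))"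
    by (rule psi_Suc_0)
  also have "\<dots> \<le> exp (- c * harm m) * exp (- (c / real (Suc m)))"
    using Suc.IH step psi_0_pos[OF assms, of m] assms
    by (intro mult_mono) (auto simp: c_def)
  also have "\<dots> = exp (- c * harm (Suc m))"
    by (simp add: harm_Suc exp_add [symmetric] divide_inverse algebra_simps)
  finally show ?case
    by (simp add: c_def)
qed

lemma psi_0_tendsto_zero:
  assumes "\<theta> > 0"
  shows "(\<lambda>m. psi \<theta> m 0) \<longlonglongrightarrow> 0"
proof (rule tendsto_sandwich[OF _ _ tendsto_const])
  have "filterlim (\<lambda>m. (\<theta> / (2 * \<theta> + 1)) * harm m) at_top sequentially"
    using assms by (intro filterlim_tendsto_pos_mult_at_top[OF tendsto_const _ harm_at_top]) auto
  then show "(\<lambda>m. exp (- (\<theta> / (2 * \<theta> + 1)) * harm m)) \<longlonglongrightarrow> 0"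
    by (auto intro: filterlim_compose[OF exp_at_bot] simp: filterlim_uminus_at_bot)
qed (use psi_0_pos[OF assms] psi_0_le_exp_harm[OF assms] in \<open>auto intro: always_eventually less_imp_le\<close>)

lemma psi_times_Beta:
  assumes "\<theta> > 0" "k \<le> n"
  shows "psi \<theta> n k * Beta \<theta> \<theta> = Beta (\<theta> + real k) (\<theta> + real (n - k))"
proof -
  have "\<theta> \<notin> \<int>\<^sub>\<le>\<^sub>0" "2 * \<theta> \<notin> \<int>\<^sub>\<le>\<^sub>0"
    using assms(1) by (auto elim!: nonpos_Ints_cases)
  then have "psi \<theta> n k = Gamma (\<theta> + k) / Gamma \<theta> * (Gamma (\<theta> + (n - k)) / Gamma \<theta>)
                          / (Gamma (2 * \<theta> + n) / Gamma (2 * \<theta>))"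
    by (simp add: psi_eq_pochhammer pochhammer_Gamma)
  moreover have "Gamma \<theta> \<noteq> 0" "Gamma (2 * \<theta>) \<noteq> 0" "Gamma (2 * \<theta> + n) \<noteq> 0"
    using assms(1) by (auto intro!: less_imp_neq[symmetric])
  ultimately show ?thesis
    using assms by (simp add: Beta_def field_simps)
qed

definition beta_weight :: "real \<Rightarrow> real \<Rightarrow> real" where
  "beta_weight \<theta> x = x powr (\<theta> - 1) * (1 - x) powr (\<theta> - 1)"

lemma beta_weight_nonneg: "beta_weight \<theta> x \<ge> 0"
  by (simp add: beta_weight_def)

lemma powr_add_nat: "y \<ge> 0 \<Longrightarrow> y powr (a + real m) = y powr a * y ^ m" for y :: real
  by (cases "y = 0") (simp_all add: powr_add powr_realpow)

lemma has_integral_beta_weight_monomial: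
  assumes "\<theta> > 0" "k \<le> n"
  shows "((\<lambda>x. beta_weight \<theta> x * (a * (x ^ k * (1 - x) ^ (n - k))))
           has_integral a * psi \<theta> n k * Beta \<theta> \<theta>) {0..1}"
proof -
  have "((\<lambda>x. x powr (\<theta> + real k - 1) * (1 - x) powr (\<theta> + real (n - k) - 1))
          has_integral Beta (\<theta> + real k) (\<theta> + real (n - k))) {0..1}"
    using assms by (intro has_integral_Beta_real) auto
  then have "((\<lambda>x. beta_weight \<theta> x * (x ^ k * (1 - x) ^ (n - k))) has_integral psi \<theta> n k * Beta \<theta> \<theta>) {0..1}"
    unfolding psi_times_Beta[OF assms]
  proof (rule has_integral_eq[rotated])
    fix x :: real
    assume "x \<in> {0..1}"
    then show "x powr (\<theta> + real k - 1) * (1 - x) powr (\<theta> + real (n - k) - 1)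
                 = beta_weight \<theta> x * (x ^ k * (1 - x) ^ (n - k))"
      using powr_add_nat[of x "\<theta> - 1" k] powr_add_nat[of "1 - x" "\<theta> - 1" "n - k"]
      by (simp add: beta_weight_def algebra_simps)
  qed
  from has_integral_mult_right[OF this, of a] show ?thesis
    by (simp add: mult_ac)
qed

section \<open>Bernstein polynomials\<close>

lemma Bernstein_0 [simp]: "Bernstein n 0 x = (1 - x) ^ n"
  by (simp add: Bernstein_def)

lemma sum_Bernstein_div_Suc:
  "real (Suc n) * x * (\<Sum>k\<le>n. Bernstein n k x / real (Suc k)) = 1 - (1 - x) ^ Suc n"
proof -
  have "real (Suc n) * x * (\<Sum>k\<le>n. Bernstein n k x / real (Suc k)) = (\<Sum>k\<le>n. Bernstein (Suc n) (Suc k) x)"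
    unfolding sum_distrib_left
  proof (intro sum.cong refl)
    fix k
    have "real (Suc n) * real (n choose k) = real (Suc n choose Suc k) * real (Suc k)"
      using Suc_times_binomial_eq[of n k] by (metis of_nat_mult)
    then show "real (Suc n) * x * (Bernstein n k x / real (Suc k)) = Bernstein (Suc n) (Suc k) x"
      by (simp add: Bernstein_def field_simps del: binomial_Suc_Suc of_nat_Suc)
  qed
  also have "\<dots> = (\<Sum>k\<le>Suc n. Bernstein (Suc n) k x) - Bernstein (Suc n) 0 x"
    unfolding sum.atMost_Suc_shift by simp
  finally show ?thesis
    by (simp only: sum_Bernstein Bernstein_0)
qed

lemma sum_Bernstein_affine:
  assumes "\<And>k. k \<le> n \<Longrightarrow> f k = a + b * of_bool (k = 0) + c / real (Suc k)"
  shows "(\<Sum>k\<le>n. Bernstein n k x * f k) = a + b * (1 - x) ^ n + c * (\<Sum>k\<le>n. Bernstein n k x / real (Suc k))"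
proof -
  have "(\<Sum>k\<le>n. Bernstein n k x * f k)
          = (\<Sum>k\<le>n. a * Bernstein n k x + b * (of_bool (k = 0) * Bernstein n k x) + c * (Bernstein n k x / real (Suc k)))"
    by (intro sum.cong refl) (simp add: assms algebra_simps)
  also have "\<dots> = a * (\<Sum>k\<le>n. Bernstein n k x) + b * (\<Sum>k\<le>n. of_bool (k = 0) * Bernstein n k x)
                     + c * (\<Sum>k\<le>n. Bernstein n k x / real (Suc k))"
    by (simp only: sum.distrib sum_distrib_left)
  also have "(\<Sum>k\<le>n. of_bool (k = 0) * Bernstein n k x) = Bernstein n 0 x"
    by (simp add: sum.If_cases)
  finally show ?thesis
    by simp
qed

lemma Bernstein_times_x_one_minus_x:
  "k \<le> n \<Longrightarrow> x * (1 - x) * Bernstein n k x = real (n choose k) * (x ^ (k + 1) * (1 - x) ^ (n + 2 - (k + 1)))"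
  by (simp add: Bernstein_def Suc_diff_le power_Suc algebra_simps)

lemma Bernstein_product_times_x:
  "k \<le> n \<Longrightarrow> l \<le> n \<Longrightarrow> x ^ 2 * (1 - x) * (Bernstein n k x * Bernstein n l x)
     = real (n choose k) * real (n choose l) * (x ^ (k + l + 2) * (1 - x) ^ (2 * n + 3 - (k + l + 2)))"
proof -
  assume "k \<le> n" "l \<le> n"
  then have "2 * n + 3 - (k + l + 2) = (n - k) + (n - l) + 1" by arith
  then show ?thesis by (simp only: Bernstein_def power_add) (simp add: mult_ac power2_eq_square)
qed

lemma Bernstein_product_times_one_minus_x:
  "k \<le> n \<Longrightarrow> l \<le> n \<Longrightarrow> x * (1 - x) ^ 2 * (Bernstein n k x * Bernstein n l x)
     = real (n choose k) * real (n choose l) * (x ^ (k + l + 1) * (1 - x) ^ (2 * n + 3 - (k + l + 1)))"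
proof -
  assume "k \<le> n" "l \<le> n"
  then have "2 * n + 3 - (k + l + 1) = (n - k) + (n - l) + 2" by arith
  then show ?thesis by (simp only: Bernstein_def power_add) (simp add: mult_ac power2_eq_square)
qed

lemma has_integral_beta_weight_Bernstein:
  assumes "\<theta> > 0" "k \<le> n"
  shows "((\<lambda>x. beta_weight \<theta> x * (x * (1 - x) * Bernstein n k x))
           has_integral real (n choose k) * psi \<theta> (n + 2) (k + 1) * Beta \<theta> \<theta>) {0..1}"
  using has_integral_beta_weight_monomial[OF assms(1), of "k + 1" "n + 2" "real (n choose k)"] assms(2)
  unfolding Bernstein_times_x_one_minus_x[OF assms(2), symmetric] by simp

lemma has_integral_beta_weight_Bernstein_product_x:
  assumes "\<theta> > 0" "k \<le> n" "l \<le> n"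
  shows "((\<lambda>x. beta_weight \<theta> x * (x ^ 2 * (1 - x) * (Bernstein n k x * Bernstein n l x)))
           has_integral real (n choose k) * real (n choose l) * psi \<theta> (2 * n + 3) (k + l + 2) * Beta \<theta> \<theta>) {0..1}"
  using has_integral_beta_weight_monomial[OF assms(1), of "k + l + 2" "2 * n + 3" "real (n choose k) * real (n choose l)"]
  unfolding Bernstein_product_times_x[OF assms(2,3), symmetric] using assms(2,3) by simp

lemma has_integral_beta_weight_Bernstein_product_one_minus_x:
  assumes "\<theta> > 0" "k \<le> n" "l \<le> n"
  shows "((\<lambda>x. beta_weight \<theta> x * (x * (1 - x) ^ 2 * (Bernstein n k x * Bernstein n l x)))
           has_integral real (n choose k) * real (n choose l) * psi \<theta> (2 * n + 3) (k + l + 1) * Beta \<theta> \<theta>) {0..1}"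
  using has_integral_beta_weight_monomial[OF assms(1), of "k + l + 1" "2 * n + 3" "real (n choose k) * real (n choose l)"]
  unfolding Bernstein_product_times_one_minus_x[OF assms(2,3), symmetric] using assms(2,3) by simp

section \<open>F as a Beta integral\<close>

definition F_integrand :: "nat \<Rightarrow> (nat \<Rightarrow> real) \<Rightarrow> (nat \<Rightarrow> real)
    \<Rightarrow> (nat \<Rightarrow> nat \<Rightarrow> real) \<Rightarrow> (nat \<Rightarrow> nat \<Rightarrow> real) \<Rightarrow> (nat \<Rightarrow> nat \<Rightarrow> real) \<Rightarrow> real \<Rightarrow> real" where
  "F_integrand n muC muD sCC sCD sDD x = x * (1 - x) *
     ((\<Sum>k\<le>n. Bernstein n k x * (muC k - muD k))
    + (\<Sum>k\<le>n. \<Sum>l\<le>n. Bernstein n k x * Bernstein n l x *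
         ((1 - x) * (sDD k l - sCD k l) - x * (sCC k l - sCD k l))))"

lemma has_integral_F_gen:
  assumes "\<theta> > 0"
  shows "((\<lambda>x. beta_weight \<theta> x * F_integrand n muC muD sCC sCD sDD x)
           has_integral F_gen \<theta> (Suc n) muC muD sCC sCD sDD * Beta \<theta> \<theta>) {0..1}"
proof -
  let ?w = "beta_weight \<theta>" and ?B = "Beta \<theta> \<theta>" and ?c = "\<lambda>k. real (n choose k)"
  have "((\<lambda>x. (\<Sum>k\<le>n. (muC k - muD k) * (?w x * (x * (1 - x) * Bernstein n k x)))
          + (\<Sum>k\<le>n. \<Sum>l\<le>n.
               (sDD k l - sCD k l) * (?w x * (x * (1 - x) ^ 2 * (Bernstein n k x * Bernstein n l x)))
             - (sCC k l - sCD k l) * (?w x * (x ^ 2 * (1 - x) * (Bernstein n k x * Bernstein n l x)))))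
        has_integral (\<Sum>k\<le>n. (muC k - muD k) * (?c k * psi \<theta> (n + 2) (k + 1) * ?B))
          + (\<Sum>k\<le>n. \<Sum>l\<le>n.
               (sDD k l - sCD k l) * (?c k * ?c l * psi \<theta> (2 * n + 3) (k + l + 1) * ?B)
             - (sCC k l - sCD k l) * (?c k * ?c l * psi \<theta> (2 * n + 3) (k + l + 2) * ?B))) {0..1}"
    using assms
    by (intro has_integral_add has_integral_diff has_integral_sum finite_atMost has_integral_mult_right
          has_integral_beta_weight_Bernstein has_integral_beta_weight_Bernstein_product_x
          has_integral_beta_weight_Bernstein_product_one_minus_x) auto
  then show ?thesis
  proof (rule has_integral_eq_rhs[OF has_integral_eq[rotated]])
    fix x :: real
    show "(\<Sum>k\<le>n. (muC k - muD k) * (?w x * (x * (1 - x) * Bernstein n k x)))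
          + (\<Sum>k\<le>n. \<Sum>l\<le>n.
               (sDD k l - sCD k l) * (?w x * (x * (1 - x) ^ 2 * (Bernstein n k x * Bernstein n l x)))
             - (sCC k l - sCD k l) * (?w x * (x ^ 2 * (1 - x) * (Bernstein n k x * Bernstein n l x))))
        = ?w x * F_integrand n muC muD sCC sCD sDD x"
      unfolding F_integrand_def distrib_left sum_distrib_left
      by (intro arg_cong2[where f = "(+)"] sum.cong refl) (simp_all add: power2_eq_square algebra_simps)
  qed (unfold F_gen_def distrib_right sum_distrib_right atMost_atLeast0,
       intro arg_cong2[where f = "(+)"] sum.cong refl, simp_all add: algebra_simps numeral_3_eq_3)
qed

section \<open>The snowdrift game\<close>

lemma F_integrand_snowdrift_Bernstein:
  fixes x :: real and n :: nat
  defines "Q \<equiv> (1 - x) ^ n" and "A \<equiv> (\<Sum>k\<le>n. Bernstein n k x / real (Suc k))"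
  shows "F_integrand n (sd_muC mb mc) (sd_muD mb) (sd_sCC sb2 sc2 sbc) (sd_sCD sb2 sbc) (sd_sDD sb2) x
           = x * (1 - x) * ((sbc - mc) * A + sbc * (2 * x - 1) * A * Q - sc2 * x * A ^ 2 + mb * Q
                            - sb2 * Q * (1 - (1 - x) * Q))"
proof -
  \<comment> \<open>For K ~ Bin(n, x), Q = P(K = 0) and A = E[1/(K+1)]; every snowdrift array is affine in
      the indicator of k = 0 and in 1/(k+1), separately in each index.\<close>
  define inner where "inner k l = (1 - x) * (sd_sDD sb2 k l - sd_sCD sb2 sbc k l)
                                  - x * (sd_sCC sb2 sc2 sbc k l - sd_sCD sb2 sbc k l)" for k l
  have single_sum: "(\<Sum>k\<le>n. Bernstein n k x * (sd_muC mb mc k - sd_muD mb k)) = mb * Q - mc * A"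
    unfolding Q_def A_def
    by (subst sum_Bernstein_affine[where a = 0 and b = mb and c = "- mc"]) (auto simp: sd_muC_def sd_muD_def)
  have inner_sum: "(\<Sum>l\<le>n. Bernstein n l x * inner k l)
      = (x * sbc * A - x * sb2 * Q) + (- (1 - x) * (1 - Q) * sb2) * of_bool (k = 0)
        + ((1 - 2 * x) * (1 - Q) * sbc + x * sbc - x * sc2 * A) / real (Suc k)" for k
  proof -
    define \<beta> where "\<beta> = (1 - x) * sb2 * (1 - of_bool (k = 0)) + (2 * x - 1) * (sb2 - sbc / real (Suc k))"
    have "(\<Sum>l\<le>n. Bernstein n l x * inner k l)
            = (\<beta> - x * (sb2 - sbc / real (Suc k))) + (- \<beta>) * Q + (x * sbc - x * sc2 / real (Suc k)) * A"
      unfolding Q_def A_def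
      by (rule sum_Bernstein_affine)
         (auto simp: inner_def \<beta>_def sd_sCC_def sd_sCD_def sd_sDD_def divide_inverse inverse_mult_distrib
            algebra_simps simp del: of_nat_Suc)
    then show ?thesis
      by (simp add: \<beta>_def divide_inverse algebra_simps)
  qed
  have double_sum: "(\<Sum>k\<le>n. Bernstein n k x * (\<Sum>l\<le>n. Bernstein n l x * inner k l))
      = (x * sbc * A - x * sb2 * Q) - (1 - x) * (1 - Q) * sb2 * Q
        + ((1 - 2 * x) * (1 - Q) * sbc + x * sbc - x * sc2 * A) * A"
    unfolding inner_sum by (subst sum_Bernstein_affine) (rule refl, simp add: Q_def A_def algebra_simps)
  have "F_integrand n (sd_muC mb mc) (sd_muD mb) (sd_sCC sb2 sc2 sbc) (sd_sCD sb2 sbc) (sd_sDD sb2) x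
      = x * (1 - x) * ((mb * Q - mc * A) + ((x * sbc * A - x * sb2 * Q) - (1 - x) * (1 - Q) * sb2 * Q
        + ((1 - 2 * x) * (1 - Q) * sbc + x * sbc - x * sc2 * A) * A))"
    unfolding F_integrand_def single_sum double_sum[symmetric] inner_def sum_distrib_left
    by (simp add: mult.assoc)
  then show ?thesis
    by (simp add: algebra_simps power2_eq_square)
qed

lemma F_integrand_snowdrift:
  fixes x :: real and n :: nat
  defines "P \<equiv> (1 - x) ^ Suc n"
  shows "real (Suc n) * F_integrand n (sd_muC mb mc) (sd_muD mb) (sd_sCC sb2 sc2 sbc) (sd_sCD sb2 sbc) (sd_sDD sb2) x
           = (sbc - mc) * (1 - x) * (1 - P) + sbc * (2 * x - 1) * (1 - P) * P
             - sc2 * (1 - x) * (1 - P) ^ 2 / real (Suc n) + real (Suc n) * x * P * (mb - sb2 * (1 - P))"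
proof -
  define A where "A = (\<Sum>k\<le>n. Bernstein n k x / real (Suc k))"
  have P: "(1 - x) * (1 - x) ^ n = P"
    by (simp add: P_def)
  have R: "1 - P = real (Suc n) * x * A"
    using sum_Bernstein_div_Suc[of n x] by (simp add: P_def A_def)
  show ?thesis
    unfolding F_integrand_snowdrift_Bernstein A_def[symmetric] P R by (simp add: P_def field_simps power2_eq_square)
qed

lemma snowdrift_integrand_lower_bound:
  fixes x P d :: real
  assumes x: "0 \<le> x" "x \<le> 1" and P: "0 \<le> P" "P \<le> 1" and d: "d > 0"
  shows "D * (1 - x) - D * (1 - x) * P - \<bar>sbc\<bar> * P - \<bar>sc2\<bar> * (1 - x) / d - (\<bar>mb\<bar> + \<bar>sb2\<bar>) * d * x * P
           \<le> D * (1 - x) * (1 - P) + sbc * (2 * x - 1) * (1 - P) * P - sc2 * (1 - x) * (1 - P) ^ 2 / d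
             + d * x * P * (mb - sb2 * (1 - P))"
proof -
  have "\<bar>(2 * x - 1) * (1 - P)\<bar> \<le> 1"
    using x P by (auto simp: abs_mult intro: mult_le_one)
  then have "\<bar>sbc\<bar> * P * \<bar>(2 * x - 1) * (1 - P)\<bar> \<le> \<bar>sbc\<bar> * P"
    using P by (intro mult_left_le) auto
  then have "\<bar>sbc * (2 * x - 1) * (1 - P) * P\<bar> \<le> \<bar>sbc\<bar> * P"
    using P by (simp add: abs_mult mult_ac)
  then have sbc: "- \<bar>sbc\<bar> * P \<le> sbc * (2 * x - 1) * (1 - P) * P"
    by linarith
  have "(1 - x) * (1 - P) ^ 2 \<le> (1 - x) * 1"
    using x P by (intro mult_left_mono power_le_one) auto
  then have "sc2 * ((1 - x) * (1 - P) ^ 2) \<le> \<bar>sc2\<bar> * ((1 - x) * 1)"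
    using x by (intro order_trans[OF mult_right_mono[OF abs_ge_self] mult_left_mono]) auto
  then have sc2: "sc2 * (1 - x) * (1 - P) ^ 2 / d \<le> \<bar>sc2\<bar> * (1 - x) / d"
    using d by (simp add: divide_right_mono mult.assoc)
  have "\<bar>mb - sb2 * (1 - P)\<bar> \<le> \<bar>mb\<bar> + \<bar>sb2\<bar>"
    using P by (auto simp: abs_mult intro!: abs_triangle_ineq4[THEN order_trans] mult_left_le)
  then have "d * x * P * (- (\<bar>mb\<bar> + \<bar>sb2\<bar>)) \<le> d * x * P * (mb - sb2 * (1 - P))"
    using x P d by (intro mult_left_mono) auto
  then have mb: "- (\<bar>mb\<bar> + \<bar>sb2\<bar>) * d * x * P \<le> d * x * P * (mb - sb2 * (1 - P))"
    by (simp add: algebra_simps)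
  show ?thesis
    using sbc sc2 mb by (simp add: algebra_simps)
qed

lemma F_integrand_snowdrift_ge:
  fixes x :: real and n :: nat
  assumes "x \<in> {0..1}"
  defines "d \<equiv> real (Suc n)"
  shows "(sbc - mc - \<bar>sc2\<bar> / d) * (1 - x) - (sbc - mc) * (1 - x) ^ (n + 2) - \<bar>sbc\<bar> * (1 - x) ^ (n + 1)
           - (\<bar>mb\<bar> + \<bar>sb2\<bar>) * d * x * (1 - x) ^ (n + 1)
         \<le> d * F_integrand n (sd_muC mb mc) (sd_muD mb) (sd_sCC sb2 sc2 sbc) (sd_sCD sb2 sbc) (sd_sDD sb2) x"
proof -
  define P where "P = (1 - x) ^ Suc n"
  have "0 \<le> P" "P \<le> 1"
    using assms(1) unfolding P_def by (auto intro: power_le_one simp del: power_Suc)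
  then have "(sbc - mc) * (1 - x) - (sbc - mc) * (1 - x) * P - \<bar>sbc\<bar> * P - \<bar>sc2\<bar> * (1 - x) / d
               - (\<bar>mb\<bar> + \<bar>sb2\<bar>) * d * x * P
             \<le> d * F_integrand n (sd_muC mb mc) (sd_muD mb) (sd_sCC sb2 sc2 sbc) (sd_sCD sb2 sbc) (sd_sDD sb2) x"
    using snowdrift_integrand_lower_bound[of x P d "sbc - mc" sbc sc2 mb sb2] assms(1)
    unfolding d_def P_def F_integrand_snowdrift by auto
  then show ?thesis
    by (simp add: P_def algebra_simps)
qed

lemma has_integral_beta_weight_tail_polynomial:
  assumes "\<theta> > 0"
  shows "((\<lambda>x. beta_weight \<theta> x * (a * (1 - x) - b * (1 - x) ^ (n + 2) - c * (1 - x) ^ (n + 1) - e * x * (1 - x) ^ (n + 1)))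
           has_integral (a / 2 - b * psi \<theta> (n + 2) 0 - c * psi \<theta> (n + 1) 0 - e * psi \<theta> (n + 2) 1) * Beta \<theta> \<theta>) {0..1}"
proof -
  have "((\<lambda>x. beta_weight \<theta> x * (a * (x ^ 0 * (1 - x) ^ (1 - 0))) - beta_weight \<theta> x * (b * (x ^ 0 * (1 - x) ^ (n + 2 - 0)))
             - beta_weight \<theta> x * (c * (x ^ 0 * (1 - x) ^ (n + 1 - 0))) - beta_weight \<theta> x * (e * (x ^ 1 * (1 - x) ^ (n + 2 - 1))))
          has_integral a * psi \<theta> 1 0 * Beta \<theta> \<theta> - b * psi \<theta> (n + 2) 0 * Beta \<theta> \<theta>
             - c * psi \<theta> (n + 1) 0 * Beta \<theta> \<theta> - e * psi \<theta> (n + 2) 1 * Beta \<theta> \<theta>) {0..1}"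
    using assms by (intro has_integral_diff has_integral_beta_weight_monomial) auto
  then show ?thesis
    by (rule has_integral_eq_rhs[OF has_integral_eq[rotated]])
       (simp_all add: psi_1_0[OF assms] right_diff_distrib left_diff_distrib mult_ac)
qed

lemma F_snowdrift_lower_bound:
  fixes n :: nat
  assumes "\<theta> > 0"
  defines "d \<equiv> real (Suc n)"
  shows "(sbc - mc - \<bar>sc2\<bar> / d) / 2 - (sbc - mc) * psi \<theta> (n + 2) 0 - \<bar>sbc\<bar> * psi \<theta> (n + 1) 0
           - (\<bar>mb\<bar> + \<bar>sb2\<bar>) * d * psi \<theta> (n + 2) 1
         \<le> d * F_snowdrift \<theta> mb mc sb2 sc2 sbc (Suc n)"
proof -
  let ?B = "Beta \<theta> \<theta>"
  have F: "((\<lambda>x. beta_weight \<theta> x * (d * F_integrand n (sd_muC mb mc) (sd_muD mb) (sd_sCC sb2 sc2 sbc) (sd_sCD sb2 sbc) (sd_sDD sb2) x))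
             has_integral d * F_snowdrift \<theta> mb mc sb2 sc2 sbc (Suc n) * ?B) {0..1}"
    using has_integral_mult_right[OF has_integral_F_gen[OF assms(1)], of d]
    by (simp add: F_snowdrift_def mult_ac)
  have "((sbc - mc - \<bar>sc2\<bar> / d) / 2 - (sbc - mc) * psi \<theta> (n + 2) 0 - \<bar>sbc\<bar> * psi \<theta> (n + 1) 0
           - (\<bar>mb\<bar> + \<bar>sb2\<bar>) * d * psi \<theta> (n + 2) 1) * ?B
        \<le> d * F_snowdrift \<theta> mb mc sb2 sc2 sbc (Suc n) * ?B"
    using mult_left_mono[OF F_integrand_snowdrift_ge beta_weight_nonneg] unfolding d_def
    by (intro has_integral_le[OF has_integral_beta_weight_tail_polynomial[OF assms(1)] F[unfolded d_def]]) auto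
  moreover have "?B > 0"
    using assms(1) by (simp add: Beta_def)
  ultimately show ?thesis
    by (rule mult_right_le_imp_le)
qed

lemma F_snowdrift_lower_bound_psi_0:
  fixes n :: nat
  assumes "\<theta> > 0" "mc \<le> sbc"
  defines "d \<equiv> real (Suc n)"
  shows "(sbc - mc - \<bar>sc2\<bar> / d) / 2 - (sbc - mc + \<bar>sbc\<bar> + (\<bar>mb\<bar> + \<bar>sb2\<bar>) * \<theta>) * psi \<theta> (Suc n) 0
         \<le> d * F_snowdrift \<theta> mb mc sb2 sc2 sbc (Suc n)"
proof -
  have psi: "0 \<le> psi \<theta> (Suc n) 0"
    using psi_0_pos[OF assms(1)] less_imp_le by blast
  have "psi \<theta> (n + 2) 0 = psi \<theta> (Suc n) 0 * ((\<theta> + real (Suc n)) / (2 * \<theta> + real (Suc n)))"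
    using psi_Suc_0[of \<theta> "Suc n"] by simp
  also have "\<dots> \<le> psi \<theta> (Suc n) 0 * 1"
    using assms(1) psi by (intro mult_left_mono) auto
  finally have "(sbc - mc) * psi \<theta> (n + 2) 0 \<le> (sbc - mc) * psi \<theta> (Suc n) 0"
    using assms(2) by (intro mult_left_mono) auto
  moreover have "d * psi \<theta> (n + 2) 1 \<le> \<theta> * psi \<theta> (Suc n) 0"
  proof -
    have "d * psi \<theta> (n + 2) 1 = psi \<theta> (Suc n) 0 * (\<theta> * (d / (2 * \<theta> + d)))"
      using psi_Suc_1[of \<theta> "Suc n"] by (simp add: d_def)
    also have "\<dots> \<le> psi \<theta> (Suc n) 0 * (\<theta> * 1)"
      using assms(1) psi by (intro mult_left_mono) (auto simp: d_def)
    finally show ?thesis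
      by (simp add: mult.commute)
  qed
  then have "(\<bar>mb\<bar> + \<bar>sb2\<bar>) * d * psi \<theta> (n + 2) 1 \<le> (\<bar>mb\<bar> + \<bar>sb2\<bar>) * \<theta> * psi \<theta> (Suc n) 0"
    by (simp add: mult.assoc mult_left_mono)
  moreover have "(sbc - mc + \<bar>sbc\<bar> + (\<bar>mb\<bar> + \<bar>sb2\<bar>) * \<theta>) * psi \<theta> (Suc n) 0
      = (sbc - mc) * psi \<theta> (Suc n) 0 + \<bar>sbc\<bar> * psi \<theta> (n + 1) 0 + (\<bar>mb\<bar> + \<bar>sb2\<bar>) * \<theta> * psi \<theta> (Suc n) 0"
    by (simp add: algebra_simps)
  ultimately show ?thesis
    using F_snowdrift_lower_bound[OF assms(1), of sbc mc sc2 n mb sb2, folded d_def] by linarith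
qed

lemma eventually_F_snowdrift_pos:
  assumes "\<theta> > 0" "mc < sbc"
  shows "eventually (\<lambda>d. F_snowdrift \<theta> mb mc sb2 sc2 sbc d > 0) sequentially"
proof -
  define M where "M = sbc - mc + \<bar>sbc\<bar> + (\<bar>mb\<bar> + \<bar>sb2\<bar>) * \<theta>"
  define h where "h n = (sbc - mc - \<bar>sc2\<bar> / real (Suc n)) / 2 - M * psi \<theta> (Suc n) 0" for n
  have "(\<lambda>n. \<bar>sc2\<bar> / real (Suc n)) \<longlonglongrightarrow> 0" "(\<lambda>n. psi \<theta> (Suc n) 0) \<longlonglongrightarrow> 0"
    using LIMSEQ_Suc[OF lim_const_over_n] LIMSEQ_Suc[OF psi_0_tendsto_zero[OF assms(1)]] by auto
  then have "h \<longlonglongrightarrow> (sbc - mc - 0) / 2 - M * 0"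
    unfolding h_def by (intro tendsto_diff tendsto_divide tendsto_mult tendsto_const) auto
  then have "eventually (\<lambda>n. h n > 0) sequentially"
    using assms(2) by (intro order_tendstoD) auto
  then have "eventually (\<lambda>n. F_snowdrift \<theta> mb mc sb2 sc2 sbc (Suc n) > 0) sequentially"
  proof (rule eventually_mono)
    fix n
    assume "h n > 0"
    then have "0 < real (Suc n) * F_snowdrift \<theta> mb mc sb2 sc2 sbc (Suc n)"
      using F_snowdrift_lower_bound_psi_0[OF assms(1) less_imp_le[OF assms(2)], of sc2 n mb sb2]
      unfolding h_def M_def by linarith
    then show "F_snowdrift \<theta> mb mc sb2 sc2 sbc (Suc n) > 0"
      by (simp add: zero_less_mult_iff)
  qed
  then show ?thesis
    by (rule eventually_sequentially_Suc[THEN iffD1])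
qed

theorem mainTheorem7:
  fixes \<theta> mu_b mu_c sigma_b2 sigma_c2 sigma_bc :: real
  assumes "\<theta> > 0" and "sigma_bc > mu_c"
  shows "\<exists>d0\<ge>2. \<forall>d\<ge>d0. F_snowdrift \<theta> mu_b mu_c sigma_b2 sigma_c2 sigma_bc d > 0"
proof -
  obtain N where "\<And>d. d \<ge> N \<Longrightarrow> F_snowdrift \<theta> mu_b mu_c sigma_b2 sigma_c2 sigma_bc d > 0"
    using eventually_F_snowdrift_pos[OF assms] unfolding eventually_sequentially by blast
  then show ?thesis
    by (intro exI[of _ "max 2 N"]) auto
qed

end
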